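(* Let $k\ge1$, $\lambda>0$, $0<\theta<1$, $F(x,y,\theta)=\frac{1+x+\theta y}{1+x+y}$. Suppose the system $( * )$: $z^-_1=\lambda F(z^-_1,z^+_2,\theta)^k$, $z^+_1=\lambda F(z^+_1,z^-_2,\theta)^k$, $z^-_2=\lambda F(z^-_2,z^+_1,\theta)^k$, $z^+_2=\lambda F(z^+_2,z^-_1,\theta)^k$ has exactly one solution in $(0,\infty)^4$. Then the system $( ** )$: $z_{1,i}=\lambda\prod_{j\in S(i)}F(z_{1,j},z_{2,j},\theta)$, $z_{2,i}=\lambda\prod_{j\in S(i)}F(z_{2,j},z_{1,j},\theta)$ for all $i\in\mathbb{T}^k$, has exactly one positive solution $(z_{1,i},z_{2,i})_{i\in\mathbb{T}^k}$; this solution does not depend on $i$, and its common value is the unique positive solution $(x,y)$ of $x=\lambda F(x,y,\theta)^k$, $y=\lambda F(y,x,\theta)^k$.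
   Context: $\mathbb{T}^k$ is the rooted Cayley tree of order $k$; $S(i)$ is the set of the $k$ direct successors of vertex $i$. *)

theory Defs
  imports Main Complex_Main
begin

definition F :: "real \<Rightarrow> real \<Rightarrow> real \<Rightarrow> real" where
  "F x y \<theta> = (1 + x + \<theta> * y) / (1 + x + y)"

text \<open>Rooted Cayley tree of order k: vertices are finite words over {0..<k},
  the root is the empty word, and the direct successors of a vertex i are i@[j], j<k.\<close>
definition cayley_vertices :: "nat \<Rightarrow> nat list set" where
  "cayley_vertices k = {xs. \<forall>j\<in>set xs. j < k}"

definition succs :: "nat \<Rightarrow> nat list \<Rightarrow> nat list set" where
  "succs k i = {i @ [j] | j. j < k}"

definition tree_solution ::
  "nat \<Rightarrow> real \<Rightarrow> real \<Rightarrow> (nat list \<Rightarrow> real) \<Rightarrow> (nat list \<Rightarrow> real) \<Rightarrow> bool" where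
  "tree_solution k lam \<theta> z1 z2 \<longleftrightarrow>
     (\<forall>i\<in>cayley_vertices k.
        z1 i > 0 \<and> z2 i > 0 \<and>
        z1 i = lam * (\<Prod>j\<in>succs k i. F (z1 j) (z2 j) \<theta>) \<and>
        z2 i = lam * (\<Prod>j\<in>succs k i. F (z2 j) (z1 j) \<theta>))"

definition four_system :: "nat \<Rightarrow> real \<Rightarrow> real \<Rightarrow> real \<Rightarrow> real \<Rightarrow> real \<Rightarrow> real \<Rightarrow> bool" where
  "four_system k lam \<theta> zm1 zp1 zm2 zp2 \<longleftrightarrow>
     zm1 = lam * F zm1 zp2 \<theta> ^ k \<and> zp1 = lam * F zp1 zm2 \<theta> ^ k \<and>
     zm2 = lam * F zm2 zp1 \<theta> ^ k \<and> zp2 = lam * F zp2 zm1 \<theta> ^ k"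

definition two_system :: "nat \<Rightarrow> real \<Rightarrow> real \<Rightarrow> real \<Rightarrow> real \<Rightarrow> bool" where
  "two_system k lam \<theta> x y \<longleftrightarrow> x = lam * F x y \<theta> ^ k \<and> y = lam * F y x \<theta> ^ k"

end

theory Submission
  imports Defs
begin

text \<open>Starting from the bounds 0 and \<open>lam\<close>, iterate
  \<open>(l, u) \<mapsto> (lam F(l,u,\<theta>)^k, lam F(u,l,\<theta>)^k)\<close>. Since \<open>F\<close> is increasing in its first and
  decreasing in its second argument, \<open>l\<^sub>n\<close> increases, \<open>u\<^sub>n\<close> decreases, and by induction on \<open>n\<close>
  every positive solution on the tree takes all its values in \<open>[l\<^sub>n, u\<^sub>n]\<close>. The limits \<open>(L, U)\<close>
  form a positive solution of the two-dimensional system, and so does \<open>(U, L)\<close>. Uniqueness of the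
  four-dimensional solution implies uniqueness of the two-dimensional one (embed \<open>(x, y)\<close> as
  \<open>(x, x, y, y)\<close>), hence \<open>L = U\<close> and the squeeze pins every tree solution to this value.\<close>

lemma F_pos: "0 \<le> x \<Longrightarrow> 0 \<le> y \<Longrightarrow> 0 \<le> \<theta> \<Longrightarrow> 0 < F x y \<theta>"
  unfolding F_def by (intro divide_pos_pos) (auto intro: add_pos_nonneg)

lemma F_le_1: "0 \<le> x \<Longrightarrow> 0 \<le> y \<Longrightarrow> \<theta> \<le> 1 \<Longrightarrow> F x y \<theta> \<le> 1"
  unfolding F_def using mult_right_mono[of \<theta> 1 y] by (simp add: divide_le_eq_1)

lemma F_mono:
  assumes "0 \<le> x" "x \<le> x'" "0 \<le> y'" "y' \<le> y" "0 \<le> \<theta>" "\<theta> \<le> 1"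
  shows "F x y \<theta> \<le> F x' y' \<theta>"
proof -
  have F_eq: "F a b \<theta> = 1 - (1 - \<theta>) * (b / (1 + a + b))" if "0 \<le> a" "0 \<le> b" for a b
    using that unfolding F_def by (simp add: field_simps)
  have "y' * x \<le> y * x'"
    using assms by (intro mult_mono) auto
  then have "y' / (1 + x' + y') \<le> y / (1 + x + y)"
    using assms by (simp add: divide_simps algebra_simps)
  then have "(1 - \<theta>) * (y' / (1 + x' + y')) \<le> (1 - \<theta>) * (y / (1 + x + y))"
    using assms by (intro mult_left_mono) auto
  then show ?thesis
    using assms F_eq[of x y] F_eq[of x' y'] by simp
qed

lemma prod_F_bounds:
  assumes "\<And>j. j \<in> A \<Longrightarrow> lo \<le> a j \<and> a j \<le> hi \<and> lo \<le> b j \<and> b j \<le> hi"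
    and "0 \<le> lo" "0 \<le> \<theta>" "\<theta> \<le> 1"
  shows "F lo hi \<theta> ^ card A \<le> (\<Prod>j\<in>A. F (a j) (b j) \<theta>)"
    and "(\<Prod>j\<in>A. F (a j) (b j) \<theta>) \<le> F hi lo \<theta> ^ card A"
proof -
  have bounds: "0 < F lo hi \<theta>" "F lo hi \<theta> \<le> F (a j) (b j) \<theta>"
    "0 < F (a j) (b j) \<theta>" "F (a j) (b j) \<theta> \<le> F hi lo \<theta>" if "j \<in> A" for j
    using assms(1)[OF that] assms(2-4) by (auto intro!: F_mono F_pos)
  have "(\<Prod>j\<in>A. F lo hi \<theta>) \<le> (\<Prod>j\<in>A. F (a j) (b j) \<theta>)"
    "(\<Prod>j\<in>A. F (a j) (b j) \<theta>) \<le> (\<Prod>j\<in>A. F hi lo \<theta>)"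
    using bounds by (intro prod_mono; fastforce)+
  then show "F lo hi \<theta> ^ card A \<le> (\<Prod>j\<in>A. F (a j) (b j) \<theta>)"
    and "(\<Prod>j\<in>A. F (a j) (b j) \<theta>) \<le> F hi lo \<theta> ^ card A"
    by simp_all
qed

lemma card_succs: "card (succs k i) = k"
proof -
  have "succs k i = (\<lambda>j. i @ [j]) ` {..<k}"
    unfolding succs_def by auto
  then show ?thesis
    by (simp add: card_image inj_on_def)
qed

lemma succs_in_cayley_vertices:
  "i \<in> cayley_vertices k \<Longrightarrow> j \<in> succs k i \<Longrightarrow> j \<in> cayley_vertices k"
  unfolding succs_def cayley_vertices_def by auto

lemma two_system_swap: "two_system k lam \<theta> x y \<Longrightarrow> two_system k lam \<theta> y x"
  unfolding two_system_def by blast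

lemma tree_solution_const:
  assumes "x > 0" "y > 0" "two_system k lam \<theta> x y"
  shows "tree_solution k lam \<theta> (\<lambda>_. x) (\<lambda>_. y)"
  using assms unfolding tree_solution_def two_system_def by (simp add: card_succs)

lemma two_system_unique_if_four_system_unique:
  assumes "\<exists>!z :: real \<times> real \<times> real \<times> real.
           (case z of (zm1, zp1, zm2, zp2) \<Rightarrow>
             zm1 > 0 \<and> zp1 > 0 \<and> zm2 > 0 \<and> zp2 > 0 \<and> four_system k lam \<theta> zm1 zp1 zm2 zp2)"
    and "x > 0" "y > 0" "two_system k lam \<theta> x y"
    and "x' > 0" "y' > 0" "two_system k lam \<theta> x' y'"
  shows "x = x' \<and> y = y'"
proof -
  have "four_system k lam \<theta> x x y y" "four_system k lam \<theta> x' x' y' y'"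
    using assms unfolding four_system_def two_system_def by blast+
  then have "(x, x, y, y) = (x', x', y', y')"
    using assms(1) assms(2-3,5-6) by (elim ex1E) (metis (mono_tags, lifting) case_prod_conv)
  then show ?thesis
    by simp
qed

primrec bound_iter :: "nat \<Rightarrow> real \<Rightarrow> real \<Rightarrow> nat \<Rightarrow> real \<times> real" where
  "bound_iter k lam \<theta> 0 = (0, lam)"
| "bound_iter k lam \<theta> (Suc n) =
     (lam * F (fst (bound_iter k lam \<theta> n)) (snd (bound_iter k lam \<theta> n)) \<theta> ^ k,
      lam * F (snd (bound_iter k lam \<theta> n)) (fst (bound_iter k lam \<theta> n)) \<theta> ^ k)"

context
  fixes k :: nat and lam \<theta> :: real
  assumes lam_pos: "lam > 0" and \<theta>_nonneg: "0 \<le> \<theta>" and \<theta>_le_1: "\<theta> \<le> 1"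
begin

abbreviation lower :: "nat \<Rightarrow> real" where
  "lower n \<equiv> fst (bound_iter k lam \<theta> n)"

abbreviation upper :: "nat \<Rightarrow> real" where
  "upper n \<equiv> snd (bound_iter k lam \<theta> n)"

lemma bound_iter_Suc:
  "lower (Suc n) = lam * F (lower n) (upper n) \<theta> ^ k"
  "upper (Suc n) = lam * F (upper n) (lower n) \<theta> ^ k"
  by simp_all

declare bound_iter.simps(2) [simp del]

lemma iteration_step_pos: "0 \<le> x \<Longrightarrow> 0 \<le> y \<Longrightarrow> 0 < lam * F x y \<theta> ^ k"
  using lam_pos F_pos \<theta>_nonneg by simp

lemma iteration_step_le_lam: "0 \<le> x \<Longrightarrow> 0 \<le> y \<Longrightarrow> lam * F x y \<theta> ^ k \<le> lam"
  using lam_pos F_pos[of x y \<theta>] F_le_1[of x y \<theta>] \<theta>_nonneg \<theta>_le_1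
  by (simp add: mult_left_le power_le_one)

lemma bound_iter_nonneg: "0 \<le> lower n \<and> 0 \<le> upper n"
  by (induction n) (use lam_pos iteration_step_pos in \<open>auto simp: bound_iter_Suc less_imp_le\<close>)

lemma bound_iter_le_lam: "lower n \<le> lam \<and> upper n \<le> lam"
  by (cases n) (use lam_pos iteration_step_le_lam bound_iter_nonneg in \<open>auto simp: bound_iter_Suc\<close>)

lemma bound_iter_monotone: "lower n \<le> lower (Suc n) \<and> upper (Suc n) \<le> upper n"
proof (induction n)
  case 0
  then show ?case
    using bound_iter_nonneg[of 1] bound_iter_le_lam[of 1] by simp
next
  case (Suc n)
  have "F (lower n) (upper n) \<theta> \<le> F (lower (Suc n)) (upper (Suc n)) \<theta>"
    "F (upper (Suc n)) (lower (Suc n)) \<theta> \<le> F (upper n) (lower n) \<theta>"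
    using Suc bound_iter_nonneg[of n] bound_iter_nonneg[of "Suc n"] \<theta>_nonneg \<theta>_le_1
    by (auto intro!: F_mono)
  then have "F (lower n) (upper n) \<theta> ^ k \<le> F (lower (Suc n)) (upper (Suc n)) \<theta> ^ k"
    "F (upper (Suc n)) (lower (Suc n)) \<theta> ^ k \<le> F (upper n) (lower n) \<theta> ^ k"
    using bound_iter_nonneg[of n] bound_iter_nonneg[of "Suc n"] \<theta>_nonneg
    by (auto intro!: power_mono less_imp_le[OF F_pos])
  then show ?case
    using lam_pos by (simp add: bound_iter_Suc[of "Suc n"] bound_iter_Suc[of n])
qed

lemma tree_solution_between_bounds:
  assumes "tree_solution k lam \<theta> z1 z2"
  shows "\<forall>i\<in>cayley_vertices k.
           lower n \<le> z1 i \<and> z1 i \<le> upper n \<and> lower n \<le> z2 i \<and> z2 i \<le> upper n"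
proof (induction n)
  case 0
  have "z1 i \<le> lam \<and> z2 i \<le> lam" if "i \<in> cayley_vertices k" for i
  proof -
    have "0 \<le> z1 j \<and> 0 \<le> z2 j" if "j \<in> succs k i" for j
      using assms succs_in_cayley_vertices[OF \<open>i \<in> cayley_vertices k\<close> that]
      unfolding tree_solution_def by (meson less_imp_le)
    then have "(\<Prod>j\<in>succs k i. F (z1 j) (z2 j) \<theta>) \<le> 1"
      "(\<Prod>j\<in>succs k i. F (z2 j) (z1 j) \<theta>) \<le> 1"
      using \<theta>_nonneg \<theta>_le_1 by (auto intro!: prod_le_1 F_le_1 less_imp_le[OF F_pos])
    then show ?thesis
      using assms that lam_pos unfolding tree_solution_def by (simp add: mult_left_le)
  qed
  then show ?case
    using assms unfolding tree_solution_def by fastforce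
next
  case (Suc n)
  show ?case
  proof
    fix i assume i: "i \<in> cayley_vertices k"
    have z_eq: "z1 i = lam * (\<Prod>j\<in>succs k i. F (z1 j) (z2 j) \<theta>)"
      "z2 i = lam * (\<Prod>j\<in>succs k i. F (z2 j) (z1 j) \<theta>)"
      using assms i unfolding tree_solution_def by blast+
    have "lower n \<le> z1 j \<and> z1 j \<le> upper n \<and> lower n \<le> z2 j \<and> z2 j \<le> upper n"
      if "j \<in> succs k i" for j
      using Suc succs_in_cayley_vertices[OF i that] by blast
    then have "F (lower n) (upper n) \<theta> ^ k \<le> (\<Prod>j\<in>succs k i. F (z1 j) (z2 j) \<theta>)"
      "(\<Prod>j\<in>succs k i. F (z1 j) (z2 j) \<theta>) \<le> F (upper n) (lower n) \<theta> ^ k"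
      "F (lower n) (upper n) \<theta> ^ k \<le> (\<Prod>j\<in>succs k i. F (z2 j) (z1 j) \<theta>)"
      "(\<Prod>j\<in>succs k i. F (z2 j) (z1 j) \<theta>) \<le> F (upper n) (lower n) \<theta> ^ k"
      using prod_F_bounds[of "succs k i" "lower n"] bound_iter_nonneg \<theta>_nonneg \<theta>_le_1
      by (simp_all add: card_succs)
    then show "lower (Suc n) \<le> z1 i \<and> z1 i \<le> upper (Suc n) \<and> lower (Suc n) \<le> z2 i \<and> z2 i \<le> upper (Suc n)"
      using lam_pos by (simp add: z_eq bound_iter_Suc)
  qed
qed

lemma bound_iter_limits:
  obtains L U where "0 < L" "0 < U" "two_system k lam \<theta> L U"
    and "\<And>z1 z2 i. tree_solution k lam \<theta> z1 z2 \<Longrightarrow> i \<in> cayley_vertices k \<Longrightarrow>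
           L \<le> z1 i \<and> z1 i \<le> U \<and> L \<le> z2 i \<and> z2 i \<le> U"
proof -
  have "incseq lower"
    using bound_iter_monotone by (simp add: incseq_SucI)
  moreover have "bdd_above (range lower)"
    using bound_iter_le_lam by (intro bdd_aboveI[of _ lam]) auto
  ultimately obtain L where L: "lower \<longlonglongrightarrow> L"
    using LIMSEQ_incseq_SUP by blast
  have "decseq upper"
    using bound_iter_monotone by (simp add: decseq_SucI)
  moreover have "bdd_below (range upper)"
    using bound_iter_nonneg by (intro bdd_belowI[of _ 0]) auto
  ultimately obtain U where U: "upper \<longlonglongrightarrow> U"
    using LIMSEQ_decseq_INF by blast
  have "0 \<le> L" "0 \<le> U"
    using L U bound_iter_nonneg by (auto intro: LIMSEQ_le_const)
  have step_tendsto: "(\<lambda>n. lam * F (a n) (b n) \<theta> ^ k) \<longlonglongrightarrow> lam * F A B \<theta> ^ k"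
    if "a \<longlonglongrightarrow> A" "b \<longlonglongrightarrow> B" "0 \<le> A" "0 \<le> B" for a b A B
    unfolding F_def using that by (intro tendsto_intros) auto
  have "(\<lambda>n. lower (Suc n)) \<longlonglongrightarrow> lam * F L U \<theta> ^ k"
    unfolding bound_iter_Suc using L U \<open>0 \<le> L\<close> \<open>0 \<le> U\<close> by (rule step_tendsto)
  then have L_eq: "L = lam * F L U \<theta> ^ k"
    using LIMSEQ_Suc[OF L] LIMSEQ_unique by blast
  have "(\<lambda>n. upper (Suc n)) \<longlonglongrightarrow> lam * F U L \<theta> ^ k"
    unfolding bound_iter_Suc using U L \<open>0 \<le> U\<close> \<open>0 \<le> L\<close> by (rule step_tendsto)
  then have U_eq: "U = lam * F U L \<theta> ^ k"
    using LIMSEQ_Suc[OF U] LIMSEQ_unique by blast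
  show ?thesis
  proof
    show "0 < L" "0 < U"
      using iteration_step_pos[OF \<open>0 \<le> L\<close> \<open>0 \<le> U\<close>] iteration_step_pos[OF \<open>0 \<le> U\<close> \<open>0 \<le> L\<close>] L_eq U_eq
      by simp_all
    show "two_system k lam \<theta> L U"
      unfolding two_system_def using L_eq U_eq ..
    show "L \<le> z1 i \<and> z1 i \<le> U \<and> L \<le> z2 i \<and> z2 i \<le> U"
      if "tree_solution k lam \<theta> z1 z2" "i \<in> cayley_vertices k" for z1 z2 i
      using tree_solution_between_bounds[OF that(1)] that(2)
      by (auto intro: LIMSEQ_le_const2[OF L] LIMSEQ_le_const[OF U])
  qed
qed

end

theorem mainTheorem14:
  fixes k :: nat and lam \<theta> :: real
  assumes "k \<ge> 1" and "lam > 0" and "0 < \<theta>" and "\<theta> < 1"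
    and "\<exists>!z :: real \<times> real \<times> real \<times> real.
           (case z of (zm1, zp1, zm2, zp2) \<Rightarrow>
             zm1 > 0 \<and> zp1 > 0 \<and> zm2 > 0 \<and> zp2 > 0 \<and> four_system k lam \<theta> zm1 zp1 zm2 zp2)"
  shows "\<exists>x y. x > 0 \<and> y > 0 \<and> two_system k lam \<theta> x y
           \<and> (\<forall>x' y'. x' > 0 \<and> y' > 0 \<and> two_system k lam \<theta> x' y' \<longrightarrow> x' = x \<and> y' = y)
           \<and> (\<exists>z1 z2. tree_solution k lam \<theta> z1 z2)
           \<and> (\<forall>z1 z2. tree_solution k lam \<theta> z1 z2 \<longrightarrow>
                 (\<forall>i\<in>cayley_vertices k. z1 i = x \<and> z2 i = y))"
proof -
  have \<theta>: "0 \<le> \<theta>" "\<theta> \<le> 1"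
    using assms(3,4) by simp_all
  obtain L U where pos: "0 < L" "0 < U" and two: "two_system k lam \<theta> L U"
    and squeeze: "\<And>z1 z2 i. tree_solution k lam \<theta> z1 z2 \<Longrightarrow> i \<in> cayley_vertices k \<Longrightarrow>
           L \<le> z1 i \<and> z1 i \<le> U \<and> L \<le> z2 i \<and> z2 i \<le> U"
    using bound_iter_limits[OF assms(2) \<theta>] by blast
  note unique = two_system_unique_if_four_system_unique[OF assms(5)]
  have "U = L"
    using unique[OF pos(2,1) two_system_swap[OF two] pos two] by (rule conjunct1)
  then show ?thesis
    using pos two unique[OF _ _ _ pos two] tree_solution_const[OF pos two] squeeze
    by (intro exI[of _ L] exI[of _ L]) (metis antisym)
qed

end
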